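(* Suppose Assumption 1 holds and let $(f_t)_{t\in\mathbb N}$ be the online gradient descent iterates with step sizes satisfying $\lim_{t\to\infty}\eta_t=0$ and $\sum_{t=1}^\infty\eta_t=\infty$. Then $$\liminf_{t\to\infty}\mathbb E\big[\mathcal E(f_t)-\mathcal E(f_H)\big]=0\qquad\text{and}\qquad\lim_{T\to\infty}\Big[\sum_{t=1}^T\eta_t\Big]^{-1}\sum_{t=1}^T\eta_t\,\mathbb E\big[\mathcal E(f_t)-\mathcal E(f_H)\big]=0.$$
   Context: Setting: Let $\mathcal X\subset\mathbb R^d$, $\mathcal Y\subset\mathbb R$, $\mathcal Z=\mathcal X\times\mathcal Y$, and let $\rho$ be a Borel probability measure on $\mathcal Z$. Let $K:\mathcal X\times\mathcal X\to\mathbb R$ be a continuous, symmetric, positive semi-definite kernel with reproducing kernel Hilbert space $H_K$ (inner product $\langle\cdot,\cdot\rangle$, norm $\|\cdot\|$), $K_x:=K(x,\cdot)$, reproducing property $f(x)=\langle f,K_x\rangle$, and $\kappa:=\sup_{x\in\mathcal X}\sqrt{K(x,x)}<\infty$. Let $\phi:\mathcal Y\times\mathbb R\to[0,\infty)$ be a loss function, differentiable in its second argument, and write $\phi'(y,s)$ for its derivative with respect to $s$. The generalization error of $f:\mathcal X\to\mathbb R$ is $\mathcal E(f)=\int_{\mathcal Z}\phi(y,f(x))\,d\rho(x,y)$. It is assumed that a minimizer $f_H\in\arg\min_{f\in H_K}\mathcal E(f)$ exists and that $\max\{\sup_{y\in\mathcal Y}\phi(y,0),\ \sup_{(x,y)\in\mathcal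 Z}\phi(y,f_H(x))\}<\infty$. Let $z_t=(x_t,y_t)$, $t\in\mathbb N$, be i.i.d. samples from $\rho$, let $(\eta_t)_{t\in\mathbb N}$ be positive step sizes, and define the online gradient descent iterates by $f_1=0$ and $f_{t+1}=f_t-\eta_t\phi'(y_t,f_t(x_t))K_{x_t}$ for $t\in\mathbb N$ (so $f_t$ depends only on $z_1,\dots,z_{t-1}$). Assumption 1: for every $y\in\mathcal Y$, $\phi(y,\cdot)$ is convex and differentiable, and there are constants $\alpha\in(0,1]$, $L>0$ with $|\phi'(y,s)-\phi'(y,\tilde s)|\le L|s-\tilde s|^{\alpha}$ for all $s,\tilde s\in\mathbb R$, $y\in\mathcal Y$. *)

theory Defs
  imports "HOL-Probability.Probability"
begin

text \<open>Elements of the RKHS are represented through a feature map \<Phi> into a real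
Hilbert space with K x x' = inner (\<Phi> x) (\<Phi> x'); the function represented by a
vector w is x \<mapsto> inner w (\<Phi> x), and K_x corresponds to \<Phi> x.\<close>

definition rkhs_fun :: "('x \<Rightarrow> 'h::real_inner) \<Rightarrow> 'h \<Rightarrow> 'x \<Rightarrow> real" where
  "rkhs_fun \<Phi> w = (\<lambda>x. inner w (\<Phi> x))"

definition gen_err :: "('x \<times> real) measure \<Rightarrow> (real \<Rightarrow> real \<Rightarrow> real) \<Rightarrow> ('x \<Rightarrow> real) \<Rightarrow> real" where
  "gen_err \<rho> \<phi> f = (\<integral>z. \<phi> (snd z) (f (fst z)) \<partial>\<rho>)"

text \<open>The value at t = 0 is an unused dummy.\<close>
fun ogd :: "('x \<Rightarrow> 'h::real_inner) \<Rightarrow> (real \<Rightarrow> real \<Rightarrow> real) \<Rightarrow> (nat \<Rightarrow> real)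
    \<Rightarrow> (nat \<Rightarrow> 'x \<times> real) \<Rightarrow> nat \<Rightarrow> 'h" where
  "ogd \<Phi> d\<phi> \<eta> z 0 = 0"
| "ogd \<Phi> d\<phi> \<eta> z (Suc t) =
     (if t = 0 then 0
      else ogd \<Phi> d\<phi> \<eta> z t
           - (\<eta> t * d\<phi> (snd (z t)) (inner (ogd \<Phi> d\<phi> \<eta> z t) (\<Phi> (fst (z t))))) *\<^sub>R \<Phi> (fst (z t)))"

end

theory Submission
  imports Defs
begin

(*
  One step of the iteration changes the squared distance to the minimizer wH by
    -2 eta_t phi'(y_t, f_t(x_t)) (f_t(x_t) - f_H(x_t)) + eta_t^2 phi'(y_t, f_t(x_t))^2 K(x_t, x_t).
  Convexity bounds the first term by 2 eta_t (phi(y_t, f_H(x_t)) - phi(y_t, f_t(x_t))).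
  For the second, a nonnegative function with alpha-Hoelder derivative (alpha <= 1) is self-bounding,
  phi'(y, s)^2 <= 4 L^2 + 4 L phi(y, s), since a gradient step of length at least one from s
  would otherwise push phi below zero.  As f_t does not depend on z_t, taking expectations turns
  the sample losses into generalization errors, and once 4 L kappa^2 eta_t <= 1 the expected excess
  error G_t satisfies  eta_t G_t <= (decrease of the squared distance) + C eta_t^2.  Summing,
  sum eta_t G_t <= R + C sum eta_t^2 = o(sum eta_t) because eta_t -> 0; so the eta-weighted
  averages of G_t tend to 0, and for G_t >= 0 this forces liminf G_t = 0.
*)

section \<open>Weighted averages\<close>

lemma sum_atLeastAtMost_split:
  fixes f :: "nat \<Rightarrow> 'a::comm_monoid_add"
  assumes "m \<le> Suc n" and "n \<le> p"
  shows "sum f {m..p} = sum f {m..n} + sum f {Suc n..p}"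
  using sum.ub_add_nat[of m n f "p - n"] assms by simp

lemma sum_sq_div_sum_tendsto_0:
  fixes \<eta> :: "nat \<Rightarrow> real"
  assumes pos: "\<And>t. 1 \<le> t \<Longrightarrow> 0 < \<eta> t" and lim: "\<eta> \<longlonglongrightarrow> 0"
    and div: "filterlim (\<lambda>T. \<Sum>t=1..T. \<eta> t) at_top sequentially"
  shows "(\<lambda>T. (\<Sum>t=1..T. (\<eta> t)\<^sup>2) / (\<Sum>t=1..T. \<eta> t)) \<longlonglongrightarrow> 0"
proof (rule tendstoI)
  fix e :: real assume e: "0 < e"
  define S where "S T = (\<Sum>t=1..T. \<eta> t)" for T
  define Q where "Q T = (\<Sum>t=1..T. (\<eta> t)\<^sup>2)" for T
  obtain N where N: "\<And>t. N \<le> t \<Longrightarrow> \<bar>\<eta> t\<bar> < e/2"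
    using LIMSEQ_D[OF lim, of "e/2"] e by auto
  have Q_le: "Q T \<le> Q N + e/2 * S T" if "N \<le> T" for T
  proof -
    have "(\<Sum>t=Suc N..T. (\<eta> t)\<^sup>2) \<le> (\<Sum>t=Suc N..T. e/2 * \<eta> t)"
    proof (rule sum_mono)
      fix t assume "t \<in> {Suc N..T}"
      then have "0 < \<eta> t" and "\<eta> t \<le> e/2"
        using N[of t] pos by auto
      then show "(\<eta> t)\<^sup>2 \<le> e/2 * \<eta> t"
        by (simp add: power2_eq_square mult_right_mono)
    qed
    also have "\<dots> \<le> e/2 * S T"
      unfolding S_def sum_distrib_left[symmetric] using e
      by (intro mult_left_mono sum_mono2) (auto simp: pos[THEN less_imp_le])
    finally show ?thesis
      using sum_atLeastAtMost_split[of 1 N T "\<lambda>t. (\<eta> t)\<^sup>2"] that unfolding Q_def by simp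
  qed
  have "(\<lambda>T. Q N / S T) \<longlonglongrightarrow> 0"
    using div unfolding S_def
    by (intro tendsto_divide_0[OF tendsto_const] filterlim_at_top_imp_at_infinity)
  then have "eventually (\<lambda>T. Q N / S T < e/2) sequentially"
    by (rule order_tendstoD(2)) (simp add: e)
  moreover have "eventually (\<lambda>T. 0 < S T) sequentially"
    using div unfolding S_def by (simp add: filterlim_at_top_dense)
  ultimately show "eventually (\<lambda>T. dist (Q T / S T) 0 < e) sequentially"
    using eventually_ge_at_top[of N]
  proof eventually_elim
    case (elim T)
    have "Q T / S T \<le> Q N / S T + e/2"
      using Q_le[OF elim(3)] elim(2) by (simp add: field_simps)
    moreover have "0 \<le> Q T / S T"
      using elim(2) unfolding Q_def by (simp add: sum_nonneg)
    ultimately show ?case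
      using elim(1) by (simp only: dist_real_def diff_zero abs_of_nonneg)
  qed
qed

lemma weighted_average_tendsto_0:
  fixes \<eta> G :: "nat \<Rightarrow> real"
  assumes pos: "\<And>t. 1 \<le> t \<Longrightarrow> 0 < \<eta> t" and lim: "\<eta> \<longlonglongrightarrow> 0"
    and div: "filterlim (\<lambda>T. \<Sum>t=1..T. \<eta> t) at_top sequentially"
    and G_nonneg: "\<And>t. 0 \<le> G t"
    and bound: "eventually (\<lambda>T. (\<Sum>t=1..T. \<eta> t * G t) \<le> R + C * (\<Sum>t=1..T. (\<eta> t)\<^sup>2)) sequentially"
  shows "(\<lambda>T. (\<Sum>t=1..T. \<eta> t * G t) / (\<Sum>t=1..T. \<eta> t)) \<longlonglongrightarrow> 0"
proof (rule tendsto_sandwich)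
  define S where "S T = (\<Sum>t=1..T. \<eta> t)" for T
  have S_pos: "eventually (\<lambda>T. 0 < S T) sequentially"
    using div unfolding S_def by (simp add: filterlim_at_top_dense)
  have P_nonneg: "0 \<le> (\<Sum>t=1..T. \<eta> t * G t)" for T
    using pos G_nonneg by (intro sum_nonneg) (simp add: less_imp_le)
  show "eventually (\<lambda>T. 0 \<le> (\<Sum>t=1..T. \<eta> t * G t) / S T) sequentially"
    using S_pos by eventually_elim (intro divide_nonneg_pos P_nonneg)
  show "eventually (\<lambda>T. (\<Sum>t=1..T. \<eta> t * G t) / S T
      \<le> R / S T + C * ((\<Sum>t=1..T. (\<eta> t)\<^sup>2) / S T)) sequentially"
    using S_pos bound by eventually_elim (simp add: divide_right_mono add_divide_distrib[symmetric])
  have "(\<lambda>T. R / S T) \<longlonglongrightarrow> 0"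
    using div unfolding S_def
    by (intro tendsto_divide_0[OF tendsto_const] filterlim_at_top_imp_at_infinity)
  then have "(\<lambda>T. R / S T + C * ((\<Sum>t=1..T. (\<eta> t)\<^sup>2) / S T)) \<longlonglongrightarrow> 0 + C * 0"
    using sum_sq_div_sum_tendsto_0[OF pos lim div] unfolding S_def
    by (intro tendsto_add tendsto_mult tendsto_const)
  then show "(\<lambda>T. R / S T + C * ((\<Sum>t=1..T. (\<eta> t)\<^sup>2) / S T)) \<longlonglongrightarrow> 0"
    by simp
qed simp

lemma liminf_eq_0_if_weighted_average_tendsto_0:
  fixes \<eta> G :: "nat \<Rightarrow> real"
  assumes pos: "\<And>t. 1 \<le> t \<Longrightarrow> 0 < \<eta> t"
    and div: "filterlim (\<lambda>T. \<Sum>t=1..T. \<eta> t) at_top sequentially"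
    and G_nonneg: "\<And>t. 0 \<le> G t"
    and average: "(\<lambda>T. (\<Sum>t=1..T. \<eta> t * G t) / (\<Sum>t=1..T. \<eta> t)) \<longlonglongrightarrow> 0"
  shows "liminf (\<lambda>t. ereal (G t)) = 0"
proof (rule antisym)
  show "0 \<le> liminf (\<lambda>t. ereal (G t))"
    by (rule Liminf_bounded) (simp add: G_nonneg)
  show "liminf (\<lambda>t. ereal (G t)) \<le> 0"
  proof (rule ccontr)
    assume "\<not> liminf (\<lambda>t. ereal (G t)) \<le> 0"
    then obtain c where c: "0 < c" "ereal c < liminf (\<lambda>t. ereal (G t))"
      by (metis ereal_dense2 ereal_less(2) not_le)
    then obtain N where N: "\<And>t. N \<le> t \<Longrightarrow> c < G t"
      using less_LiminfD[OF c(2)] by (auto simp: eventually_sequentially)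
    define S where "S T = (\<Sum>t=1..T. \<eta> t)" for T
    have lower: "c - c * S N / S T \<le> (\<Sum>t=1..T. \<eta> t * G t) / S T"
      if "N \<le> T" and "0 < S T" for T
    proof -
      have "c * (\<Sum>t=Suc N..T. \<eta> t) \<le> (\<Sum>t=Suc N..T. \<eta> t * G t)"
        unfolding sum_distrib_left using N pos
        by (intro sum_mono) (auto simp: mult.commute less_imp_le)
      also have "\<dots> \<le> (\<Sum>t=1..T. \<eta> t * G t)"
        by (intro sum_mono2) (auto intro!: mult_nonneg_nonneg G_nonneg simp: pos[THEN less_imp_le])
      finally have "c * (S T - S N) \<le> (\<Sum>t=1..T. \<eta> t * G t)"
        using sum_atLeastAtMost_split[of 1 N T \<eta>] that(1) unfolding S_def by simp
      then have "c * (S T - S N) / S T \<le> (\<Sum>t=1..T. \<eta> t * G t) / S T"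
        using that(2) by (simp add: divide_right_mono)
      moreover have "c * (S T - S N) / S T = c - c * S N / S T"
        using that(2) by (simp add: field_simps)
      ultimately show ?thesis by simp
    qed
    have "(\<lambda>T. c - c * S N / S T) \<longlonglongrightarrow> c - 0"
      using div unfolding S_def
      by (intro tendsto_diff tendsto_const tendsto_divide_0[OF tendsto_const]
          filterlim_at_top_imp_at_infinity)
    moreover have "eventually (\<lambda>T. 0 < S T) sequentially"
      using div unfolding S_def by (simp add: filterlim_at_top_dense)
    then have "eventually (\<lambda>T. c - c * S N / S T \<le> (\<Sum>t=1..T. \<eta> t * G t) / S T) sequentially"
      using eventually_ge_at_top[of N] by eventually_elim (blast intro: lower)
    ultimately have "c - 0 \<le> 0"
      using average unfolding S_def by (rule tendsto_le[OF sequentially_bot, rotated])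
    then show False using c(1) by simp
  qed
qed

section \<open>Nonnegative functions with a Hoelder continuous derivative\<close>

lemma hoelder_deriv_upper_bound:
  fixes f f' :: "real \<Rightarrow> real"
  assumes deriv: "\<And>s. (f has_real_derivative f' s) (at s)"
    and hoelder: "\<And>s s'. \<bar>f' s - f' s'\<bar> \<le> L * \<bar>s - s'\<bar> powr \<alpha>"
    and "0 \<le> \<alpha>" and "0 \<le> L"
  shows "f s' \<le> f s + f' s * (s' - s) + L * \<bar>s' - s\<bar> powr \<alpha> * \<bar>s' - s\<bar>"
proof -
  obtain z where z: "\<bar>z - s\<bar> \<le> \<bar>s' - s\<bar>" and mvt: "f s' - f s = (s' - s) * f' z"
  proof (cases s s' rule: linorder_cases)
    case less
    then obtain z where "s < z" "z < s'" "f s' - f s = (s' - s) * f' z"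
      using MVT2[OF less, of f f'] deriv by blast
    then show ?thesis by (intro that[of z]) auto
  next
    case equal
    with that show ?thesis by auto
  next
    case greater
    then obtain z where "s' < z" "z < s" "f s - f s' = (s - s') * f' z"
      using MVT2[OF greater, of f f'] deriv by blast
    then show ?thesis by (intro that[of z]) (auto simp: algebra_simps)
  qed
  have "f s' - f s - f' s * (s' - s) = (f' z - f' s) * (s' - s)"
    using mvt by (simp add: algebra_simps)
  also have "\<dots> \<le> \<bar>f' z - f' s\<bar> * \<bar>s' - s\<bar>"
    by (metis abs_ge_self abs_mult)
  also have "\<dots> \<le> L * \<bar>z - s\<bar> powr \<alpha> * \<bar>s' - s\<bar>"
    using hoelder[of z s] by (intro mult_right_mono) auto
  also have "\<dots> \<le> L * \<bar>s' - s\<bar> powr \<alpha> * \<bar>s' - s\<bar>"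
    using z assms(3,4) by (intro mult_right_mono mult_left_mono powr_mono2) auto
  finally show ?thesis by simp
qed

text \<open>If \<open>r = \<bar>f' s\<bar> / (2 L) \<ge> 1\<close>, then \<open>r powr \<alpha> \<le> r\<close>, and a step of length \<open>r\<close> from \<open>s\<close>
  against the derivative lowers \<open>f\<close> by at least \<open>(f' s)\<^sup>2 / (4 L)\<close>; as \<open>f \<ge> 0\<close>, this is at most \<open>f s\<close>.\<close>
lemma hoelder_deriv_sq_le:
  fixes f f' :: "real \<Rightarrow> real"
  assumes deriv: "\<And>s. (f has_real_derivative f' s) (at s)"
    and hoelder: "\<And>s s'. \<bar>f' s - f' s'\<bar> \<le> L * \<bar>s - s'\<bar> powr \<alpha>"
    and \<alpha>: "0 < \<alpha>" "\<alpha> \<le> 1" and L: "0 < L" and nonneg: "\<And>s. 0 \<le> f s"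
  shows "(f' s)\<^sup>2 \<le> 4 * L\<^sup>2 + 4 * L * f s"
proof (cases "\<bar>f' s\<bar> < 2 * L")
  case True
  then have "(f' s)\<^sup>2 \<le> (2 * L)\<^sup>2"
    using abs_le_square_iff[of "f' s" "2 * L"] L by simp
  moreover have "0 \<le> 4 * L * f s"
    using nonneg[of s] L by simp
  ultimately show ?thesis
    by (simp add: power_mult_distrib)
next
  case False
  define r where "r = \<bar>f' s\<bar> / (2 * L)"
  define s' where "s' = (if 0 \<le> f' s then s - r else s + r)"
  have r: "1 \<le> r"
    using False L unfolding r_def by simp
  have step: "\<bar>s' - s\<bar> = r" "f' s * (s' - s) = - \<bar>f' s\<bar> * r"
    using r by (auto simp: s'_def)
  have "r powr \<alpha> \<le> r"
    using powr_mono[of \<alpha> 1 r] r \<alpha> by simp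
  have "0 \<le> f s'" by (rule nonneg)
  also have "\<dots> \<le> f s + f' s * (s' - s) + L * \<bar>s' - s\<bar> powr \<alpha> * \<bar>s' - s\<bar>"
    using hoelder_deriv_upper_bound[OF deriv hoelder] \<alpha> L by simp
  also have "\<dots> = f s - \<bar>f' s\<bar> * r + L * r powr \<alpha> * r"
    by (simp only: step)
  also have "\<dots> \<le> f s - \<bar>f' s\<bar> * r + L * r * r"
    using \<open>r powr \<alpha> \<le> r\<close> r L by (intro add_left_mono mult_right_mono mult_left_mono) auto
  also have "\<dots> = f s - (f' s)\<^sup>2 / (4 * L)"
    using L by (simp add: r_def field_simps power2_eq_square)
  finally have "(f' s)\<^sup>2 \<le> 4 * L * f s"
    using L by (simp add: field_simps)
  then show ?thesis
    by (simp add: add_increasing)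
qed

section \<open>Online gradient descent\<close>

lemma continuous_on_feature_map:
  fixes \<Phi> :: "'x::topological_space \<Rightarrow> 'h::real_inner"
  assumes feature: "\<forall>x\<in>X. \<forall>x'\<in>X. K x x' = inner (\<Phi> x) (\<Phi> x')"
    and K_cont: "continuous_on (X \<times> X) (\<lambda>(x, x'). K x x')"
  shows "continuous_on X \<Phi>"
  unfolding continuous_on_def
proof
  fix x0 assume x0: "x0 \<in> X"
  have "continuous_on X (\<lambda>x. K x x)"
    by (rule continuous_on_compose2[OF K_cont, of X "\<lambda>x. (x, x)", simplified])
      (auto intro: continuous_on_Pair continuous_on_id)
  moreover have "continuous_on X (\<lambda>x. K x x0)"
    by (rule continuous_on_compose2[OF K_cont, of X "\<lambda>x. (x, x0)", simplified])
      (auto intro: continuous_on_Pair continuous_on_id continuous_on_const x0)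
  ultimately have "((\<lambda>x. sqrt (K x x - 2 * K x x0 + K x0 x0)) \<longlongrightarrow> sqrt (K x0 x0 - 2 * K x0 x0 + K x0 x0))
      (at x0 within X)"
    using x0 unfolding continuous_on_def by (intro tendsto_intros) auto
  moreover have "sqrt (K x x - 2 * K x x0 + K x0 x0) = norm (\<Phi> x - \<Phi> x0)" if "x \<in> X" for x
    using that x0 feature
    by (simp add: norm_eq_sqrt_inner inner_diff_left inner_diff_right inner_commute)
  then have "eventually (\<lambda>x. sqrt (K x x - 2 * K x x0 + K x0 x0) = norm (\<Phi> x - \<Phi> x0))
      (at x0 within X)"
    by (auto simp: eventually_at_filter)
  ultimately have "((\<lambda>x. norm (\<Phi> x - \<Phi> x0)) \<longlongrightarrow> 0) (at x0 within X)"
    by (simp add: Lim_transform_eventually)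
  then show "(\<Phi> \<longlongrightarrow> \<Phi> x0) (at x0 within X)"
    by (simp add: tendsto_norm_zero_iff LIM_zero_iff)
qed

lemma integral_PiM_fun_upd:
  fixes G :: "(nat \<Rightarrow> 'a) \<Rightarrow> real"
  assumes \<rho>: "prob_space \<rho>" and G: "integrable (PiM UNIV (\<lambda>_. \<rho>)) G"
  shows "integrable (PiM UNIV (\<lambda>_. \<rho>)) (\<lambda>\<omega>. \<integral>z. G (\<omega> (t := z)) \<partial>\<rho>)"
    and "(\<integral>\<omega>. G \<omega> \<partial>(PiM UNIV (\<lambda>_. \<rho>))) =
      (\<integral>\<omega>. (\<integral>z. G (\<omega> (t := z)) \<partial>\<rho>) \<partial>(PiM UNIV (\<lambda>_. \<rho>)))"
proof -
  let ?M = "PiM UNIV (\<lambda>_::nat. \<rho>)"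
  interpret pair_prob_space \<rho> ?M
    using \<rho> by (simp add: pair_prob_space_def pair_sigma_finite_def prob_space_imp_sigma_finite
        prob_space_PiM)
  have upd: "(\<lambda>p. (snd p)(t := fst p)) \<in> measurable (\<rho> \<Otimes>\<^sub>M ?M) ?M"
    by (rule measurable_fun_upd[where J=UNIV]) auto
  have distr: "distr (\<rho> \<Otimes>\<^sub>M ?M) ?M (\<lambda>p. (snd p)(t := fst p)) = ?M"
    using distr_pair_PiM_eq_PiM[of UNIV "\<lambda>_. \<rho>" t] \<rho> by (simp add: case_prod_beta')
  have int: "integrable (\<rho> \<Otimes>\<^sub>M ?M) (\<lambda>(z, \<omega>). G (\<omega> (t := z)))"
    using integrable_distr_eq[OF upd borel_measurable_integrable[OF G]] G distr
    by (simp add: case_prod_beta')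
  then show "integrable ?M (\<lambda>\<omega>. \<integral>z. G (\<omega> (t := z)) \<partial>\<rho>)"
    by (rule integrable_snd)
  have "(\<integral>\<omega>. G \<omega> \<partial>?M) = (\<integral>p. G ((snd p)(t := fst p)) \<partial>(\<rho> \<Otimes>\<^sub>M ?M))"
    using integral_distr[OF upd borel_measurable_integrable[OF G]] distr by simp
  also have "\<dots> = (\<integral>\<omega>. (\<integral>z. G (\<omega> (t := z)) \<partial>\<rho>) \<partial>?M)"
    using integral_snd[OF int] by (simp add: case_prod_beta')
  finally show "(\<integral>\<omega>. G \<omega> \<partial>?M) = (\<integral>\<omega>. (\<integral>z. G (\<omega> (t := z)) \<partial>\<rho>) \<partial>?M)" .
qed

lemma ogd_cong:
  assumes "\<And>s. s < t \<Longrightarrow> z s = z' s"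
  shows "ogd \<Phi> d\<phi> \<eta> z t = ogd \<Phi> d\<phi> \<eta> z' t"
  using assms by (induction t) auto

locale ogd_setting =
  fixes X :: "'x::second_countable_topology set" and Y :: "real set"
    and \<rho> :: "('x \<times> real) measure"
    and \<Phi> :: "'x \<Rightarrow> 'h::real_inner"
    and \<phi> \<phi>' :: "real \<Rightarrow> real \<Rightarrow> real"
    and \<eta> :: "nat \<Rightarrow> real"
    and \<alpha> L \<kappa> B :: real
    and wH :: 'h
  assumes rho_prob: "prob_space \<rho>"
    and rho_sets: "sets \<rho> = sets (restrict_space borel (X \<times> Y))"
    and Phi_cont: "continuous_on X \<Phi>"
    and norm_Phi_le: "\<And>x. x \<in> X \<Longrightarrow> norm (\<Phi> x) \<le> \<kappa>"
    and phi_nonneg: "\<And>y s. y \<in> Y \<Longrightarrow> 0 \<le> \<phi> y s"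
    and phi_meas: "(\<lambda>(y, s). \<phi> y s) \<in> borel_measurable (restrict_space borel (Y \<times> UNIV))"
    and phi_convex: "\<And>y. y \<in> Y \<Longrightarrow> convex_on UNIV (\<phi> y)"
    and phi_deriv: "\<And>y s. y \<in> Y \<Longrightarrow> (\<phi> y has_real_derivative \<phi>' y s) (at s)"
    and alpha: "0 < \<alpha>" "\<alpha> \<le> 1" and L_pos: "0 < L"
    and phi_hoelder: "\<And>y s s'. y \<in> Y \<Longrightarrow> \<bar>\<phi>' y s - \<phi>' y s'\<bar> \<le> L * \<bar>s - s'\<bar> powr \<alpha>"
    and phi_zero_le: "\<And>y. y \<in> Y \<Longrightarrow> \<phi> y 0 \<le> B"
    and wH_min: "\<And>w. gen_err \<rho> \<phi> (rkhs_fun \<Phi> wH) \<le> gen_err \<rho> \<phi> (rkhs_fun \<Phi> w)"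
    and eta_pos: "\<And>t. 1 \<le> t \<Longrightarrow> 0 < \<eta> t"
begin

abbreviation M :: "(nat \<Rightarrow> 'x \<times> real) measure" where
  "M \<equiv> PiM UNIV (\<lambda>_. \<rho>)"

abbreviation W :: "nat \<Rightarrow> (nat \<Rightarrow> 'x \<times> real) \<Rightarrow> 'h" where
  "W t \<omega> \<equiv> ogd \<Phi> \<phi>' \<eta> \<omega> t"

abbreviation risk :: "'h \<Rightarrow> real" where
  "risk v \<equiv> gen_err \<rho> \<phi> (rkhs_fun \<Phi> v)"

definition loss :: "'h \<Rightarrow> 'x \<times> real \<Rightarrow> real" where
  "loss v z = \<phi> (snd z) (inner v (\<Phi> (fst z)))"

lemma risk_eq_integral_loss: "risk v = (\<integral>z. loss v z \<partial>\<rho>)"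
  by (simp add: gen_err_def rkhs_fun_def loss_def)

sublocale M: prob_space M
  by (rule prob_space_PiM) (rule rho_prob)

lemma space_rho: "space \<rho> = X \<times> Y"
  using sets_eq_imp_space_eq[OF rho_sets] by (simp add: space_restrict_space)

lemma sample_in_space:
  assumes "\<omega> \<in> space M"
  shows "fst (\<omega> t) \<in> X" and "snd (\<omega> t) \<in> Y"
  using PiE_mem[of \<omega> UNIV "\<lambda>_. X \<times> Y" t] assms by (auto simp: space_PiM space_rho)

lemma kappa_nonneg: "0 \<le> \<kappa>"
proof -
  obtain z where "z \<in> space \<rho>"
    using prob_space.not_empty[OF rho_prob] by blast
  then have "norm (\<Phi> (fst z)) \<le> \<kappa>"
    by (intro norm_Phi_le) (auto simp: space_rho)
  then show ?thesis
    using norm_ge_zero order_trans by blast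
qed

lemma abs_inner_Phi_le:
  assumes "x \<in> X"
  shows "\<bar>inner v (\<Phi> x)\<bar> \<le> norm v * \<kappa>"
  using Cauchy_Schwarz_ineq2[of v "\<Phi> x"] mult_left_mono[OF norm_Phi_le[OF assms], of "norm v"]
  by simp

lemma phi_above_tangent: "y \<in> Y \<Longrightarrow> \<phi> y s + \<phi>' y s * (h - s) \<le> \<phi> y h"
  using convex_on_imp_above_tangent[OF phi_convex connected_UNIV, of y s h "\<phi>' y s"] phi_deriv
  by simp

lemma phi'_sq_le: "y \<in> Y \<Longrightarrow> (\<phi>' y s)\<^sup>2 \<le> 4 * L\<^sup>2 + 4 * L * \<phi> y s"
  using hoelder_deriv_sq_le[of "\<phi> y" "\<phi>' y" L \<alpha>] phi_deriv phi_hoelder alpha L_pos phi_nonneg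
  by blast

lemma phi'_bounded: "\<exists>G. \<forall>y\<in>Y. \<forall>s. \<bar>s\<bar> \<le> R \<longrightarrow> \<bar>\<phi>' y s\<bar> \<le> G"
proof (intro exI ballI allI impI)
  fix y s assume y: "y \<in> Y" and s: "\<bar>s\<bar> \<le> R"
  have "4 * L * \<phi> y 0 \<le> 4 * L * B"
    using phi_zero_le[OF y] L_pos by simp
  then have "(\<phi>' y 0)\<^sup>2 \<le> 4 * L\<^sup>2 + 4 * L * B"
    using phi'_sq_le[OF y, of 0] by linarith
  then have "\<bar>\<phi>' y 0\<bar> \<le> sqrt (4 * L\<^sup>2 + 4 * L * B)"
    by (intro real_le_rsqrt) simp
  moreover have "L * \<bar>s\<bar> powr \<alpha> \<le> L * R powr \<alpha>"
    using s alpha L_pos by (intro mult_left_mono powr_mono2) auto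
  ultimately show "\<bar>\<phi>' y s\<bar> \<le> sqrt (4 * L\<^sup>2 + 4 * L * B) + L * R powr \<alpha>"
    using phi_hoelder[OF y, of s 0] by simp
qed

lemma phi_bounded: "\<exists>C. \<forall>y\<in>Y. \<forall>s. \<bar>s\<bar> \<le> R \<longrightarrow> \<phi> y s \<le> C"
proof -
  obtain G where G: "\<And>y s. y \<in> Y \<Longrightarrow> \<bar>s\<bar> \<le> R \<Longrightarrow> \<bar>\<phi>' y s\<bar> \<le> G"
    using phi'_bounded[of R] by blast
  have "\<phi> y s \<le> B + G * R" if y: "y \<in> Y" and s: "\<bar>s\<bar> \<le> R" for y s
  proof -
    have "\<phi> y s \<le> \<phi> y 0 + \<phi>' y s * s"
      using phi_above_tangent[OF y, of s 0] by simp
    also have "\<dots> \<le> B + \<bar>\<phi>' y s\<bar> * \<bar>s\<bar>"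
      using phi_zero_le[OF y] by (simp add: abs_mult[symmetric])
    also have "\<dots> \<le> B + G * R"
      using G[OF y s] s by (intro add_left_mono mult_mono) auto
    finally show ?thesis .
  qed
  then show ?thesis by blast
qed

lemma norm_W_bounded: "\<exists>R. \<forall>\<omega>\<in>space M. norm (W t \<omega>) \<le> R"
proof (induction t)
  case 0
  then show ?case by auto
next
  case (Suc t)
  then obtain R where R: "\<And>\<omega>. \<omega> \<in> space M \<Longrightarrow> norm (W t \<omega>) \<le> R"
    by blast
  obtain G where G: "\<And>y s. y \<in> Y \<Longrightarrow> \<bar>s\<bar> \<le> R * \<kappa> \<Longrightarrow> \<bar>\<phi>' y s\<bar> \<le> G"
    using phi'_bounded[of "R * \<kappa>"] by blast
  have "norm (W (Suc t) \<omega>) \<le> R + \<bar>\<eta> t\<bar> * G * \<kappa>" if \<omega>: "\<omega> \<in> space M" and "t \<noteq> 0" for \<omega>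
  proof -
    define x y where "x = fst (\<omega> t)" and "y = snd (\<omega> t)"
    define s where "s = inner (W t \<omega>) (\<Phi> x)"
    have x: "x \<in> X" and y: "y \<in> Y"
      using sample_in_space[OF \<omega>] by (auto simp: x_def y_def)
    have "\<bar>s\<bar> \<le> R * \<kappa>"
      using abs_inner_Phi_le[OF x, of "W t \<omega>"] mult_right_mono[OF R[OF \<omega>] kappa_nonneg]
      unfolding s_def by linarith
    then have "\<bar>\<phi>' y s\<bar> \<le> G"
      by (rule G[OF y])
    then have "\<bar>\<eta> t\<bar> * \<bar>\<phi>' y s\<bar> * norm (\<Phi> x) \<le> \<bar>\<eta> t\<bar> * G * \<kappa>"
      using norm_Phi_le[OF x] by (intro mult_mono mult_left_mono) auto
    moreover have "W (Suc t) \<omega> = W t \<omega> - (\<eta> t * \<phi>' y s) *\<^sub>R \<Phi> x"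
      using \<open>t \<noteq> 0\<close> by (simp add: x_def y_def s_def)
    then have "norm (W (Suc t) \<omega>) \<le> norm (W t \<omega>) + \<bar>\<eta> t\<bar> * \<bar>\<phi>' y s\<bar> * norm (\<Phi> x)"
      using norm_triangle_ineq4[of "W t \<omega>" "(\<eta> t * \<phi>' y s) *\<^sub>R \<Phi> x"] by (simp add: abs_mult)
    ultimately show ?thesis
      using R[OF \<omega>] by linarith
  qed
  then show ?case
    by (cases "t = 0") auto
qed

lemma loss_bounded:
  assumes "\<forall>\<omega>\<in>space M. norm (v \<omega>) \<le> R"
  shows "\<exists>C. \<forall>\<omega>\<in>space M. \<bar>loss (v \<omega>) (\<omega> t)\<bar> \<le> C"
proof -
  obtain C where C: "\<And>y s. y \<in> Y \<Longrightarrow> \<bar>s\<bar> \<le> R * \<kappa> \<Longrightarrow> \<phi> y s \<le> C"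
    using phi_bounded[of "R * \<kappa>"] by blast
  have "\<bar>loss (v \<omega>) (\<omega> t)\<bar> \<le> C" if \<omega>: "\<omega> \<in> space M" for \<omega>
  proof -
    have "\<bar>inner (v \<omega>) (\<Phi> (fst (\<omega> t)))\<bar> \<le> R * \<kappa>"
      using abs_inner_Phi_le[OF sample_in_space(1)[OF \<omega>], of "v \<omega>"]
        mult_right_mono[OF _ kappa_nonneg, of "norm (v \<omega>)" R] assms \<omega> by (meson order_trans)
    then show ?thesis
      using C phi_nonneg sample_in_space(2)[OF \<omega>] unfolding loss_def by fastforce
  qed
  then show ?thesis by blast
qed

subsection \<open>Measurability\<close>

lemma measurable_rho_iff: "f \<in> measurable \<rho> N \<longleftrightarrow> f \<in> measurable (restrict_space borel (X \<times> Y)) N"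
  using measurable_cong_sets[OF rho_sets refl, of N] by simp

lemma fst_measurable [measurable]: "fst \<in> borel_measurable \<rho>"
  unfolding measurable_rho_iff
  by (intro measurable_restrict_space1 borel_measurable_continuous_onI continuous_intros)

lemma snd_measurable [measurable]: "snd \<in> borel_measurable \<rho>"
  unfolding measurable_rho_iff
  by (intro measurable_restrict_space1 borel_measurable_continuous_onI continuous_intros)

lemma measurable_compose_restrict_Y:
  fixes h :: "real \<Rightarrow> real \<Rightarrow> real"
  assumes h: "(\<lambda>(y, s). h y s) \<in> borel_measurable (restrict_space borel (Y \<times> UNIV))"
    and f: "f \<in> borel_measurable N" and g: "g \<in> borel_measurable N"
    and f_Y: "\<And>x. x \<in> space N \<Longrightarrow> f x \<in> Y"
  shows "(\<lambda>x. h (f x) (g x)) \<in> borel_measurable N"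
proof -
  have "(\<lambda>x. (f x, g x)) \<in> measurable N (restrict_space borel (Y \<times> UNIV))"
    using f_Y by (intro measurable_restrict_space2 borel_measurable_Pair f g) auto
  from measurable_comp[OF this h] show ?thesis
    by (simp add: o_def)
qed

lemma phi'_measurable: "(\<lambda>(y, s). \<phi>' y s) \<in> borel_measurable (restrict_space borel (Y \<times> UNIV))"
proof (rule borel_measurable_LIMSEQ_real)
  let ?h = "\<lambda>n::nat. inverse (real (Suc n))"
  fix p :: "real \<times> real"
  assume "p \<in> space (restrict_space borel (Y \<times> UNIV))"
  then have "(\<lambda>h. (\<phi> (fst p) (snd p + h) - \<phi> (fst p) (snd p)) / h) \<midarrow>0\<rightarrow> \<phi>' (fst p) (snd p)"
    using phi_deriv by (auto simp: space_restrict_space DERIV_def)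
  moreover have "filterlim ?h (at 0) sequentially"
    using LIMSEQ_inverse_real_of_nat by (auto simp: filterlim_at intro!: always_eventually)
  ultimately have "(\<lambda>n. (\<phi> (fst p) (snd p + ?h n) - \<phi> (fst p) (snd p)) / ?h n)
      \<longlonglongrightarrow> \<phi>' (fst p) (snd p)"
    by (rule filterlim_compose)
  then show "(\<lambda>n. (\<phi> (fst p) (snd p + ?h n) - \<phi> (fst p) (snd p)) / ?h n)
      \<longlonglongrightarrow> (case p of (y, s) \<Rightarrow> \<phi>' y s)"
    by (simp add: case_prod_beta)
next
  fix n
  have shifted: "(\<lambda>p. \<phi> (fst p) (snd p + c)) \<in> borel_measurable (restrict_space borel (Y \<times> UNIV))"
    for c :: real
    by (intro measurable_compose_restrict_Y[OF phi_meas] measurable_restrict_space1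
        borel_measurable_continuous_onI continuous_intros)
      (auto simp: space_restrict_space)
  have "(\<lambda>p. \<phi> (fst p) (snd p)) \<in> borel_measurable (restrict_space borel (Y \<times> UNIV))"
    using shifted[of 0] by simp
  with shifted[of "inverse (real (Suc n))"]
  show "(\<lambda>p. (\<phi> (fst p) (snd p + inverse (real (Suc n))) - \<phi> (fst p) (snd p)) / inverse (real (Suc n)))
      \<in> borel_measurable (restrict_space borel (Y \<times> UNIV))"
    by measurable
qed

lemma kernel_measurable:
  "(\<lambda>p. inner (\<Phi> (fst (fst p))) (\<Phi> (fst (snd p)))) \<in> borel_measurable (\<rho> \<Otimes>\<^sub>M \<rho>)"
proof -
  have pairs: "(\<lambda>p. (fst (fst p), fst (snd p))) \<in> measurable (\<rho> \<Otimes>\<^sub>M \<rho>) (restrict_space borel (X \<times> X))"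
    by (intro measurable_restrict_space2) (auto simp: space_pair_measure space_rho)
  have "continuous_on (X \<times> X) (\<lambda>(x, x'). inner (\<Phi> x) (\<Phi> x'))"
    unfolding case_prod_beta
    by (intro continuous_on_inner continuous_on_compose2[OF Phi_cont] continuous_on_fst
        continuous_on_snd continuous_on_id) auto
  from measurable_comp[OF pairs borel_measurable_continuous_on_restrict[OF this]] show ?thesis
    by (simp add: o_def)
qed

lemma inner_Phi_measurable [measurable]: "(\<lambda>z. inner v (\<Phi> (fst z))) \<in> borel_measurable \<rho>"
  unfolding measurable_rho_iff
  by (intro borel_measurable_continuous_on_restrict continuous_on_inner continuous_on_const
      continuous_on_compose2[OF Phi_cont] continuous_intros) auto

lemma sample_measurable [measurable]: "(\<lambda>\<omega>. \<omega> t) \<in> measurable M \<rho>"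
  by (rule measurable_component_singleton) simp

lemma inner_W_measurable:
  "(\<lambda>p. inner (W t (fst p)) (\<Phi> (fst (snd p)))) \<in> borel_measurable (M \<Otimes>\<^sub>M \<rho>)"
proof (induction t)
  case (Suc t)
  show ?case
  proof (cases "t = 0")
    case False
    have "(\<lambda>p. (fst p, fst p t)) \<in> measurable (M \<Otimes>\<^sub>M \<rho>) (M \<Otimes>\<^sub>M \<rho>)"
      by (intro measurable_Pair measurable_fst measurable_compose[OF measurable_fst sample_measurable])
    from measurable_compose[OF this Suc.IH]
    have at_sample: "(\<lambda>p. inner (W t (fst p)) (\<Phi> (fst (fst p t)))) \<in> borel_measurable (M \<Otimes>\<^sub>M \<rho>)"
      by simp
    have step_size: "(\<lambda>p. \<phi>' (snd (fst p t)) (inner (W t (fst p)) (\<Phi> (fst (fst p t)))))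
        \<in> borel_measurable (M \<Otimes>\<^sub>M \<rho>)"
      by (rule measurable_compose_restrict_Y[OF phi'_measurable _ at_sample])
        (auto simp: space_pair_measure dest: sample_in_space)
    have "(\<lambda>p. (fst p t, snd p)) \<in> measurable (M \<Otimes>\<^sub>M \<rho>) (\<rho> \<Otimes>\<^sub>M \<rho>)"
      by (intro measurable_Pair measurable_snd measurable_compose[OF measurable_fst sample_measurable])
    from measurable_compose[OF this kernel_measurable]
    have kernel: "(\<lambda>p. inner (\<Phi> (fst (fst p t))) (\<Phi> (fst (snd p)))) \<in> borel_measurable (M \<Otimes>\<^sub>M \<rho>)"
      by simp
    have recursion: "(\<lambda>p. inner (W (Suc t) (fst p)) (\<Phi> (fst (snd p))))
      = (\<lambda>p. inner (W t (fst p)) (\<Phi> (fst (snd p)))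
        - \<eta> t * \<phi>' (snd (fst p t)) (inner (W t (fst p)) (\<Phi> (fst (fst p t))))
          * inner (\<Phi> (fst (fst p t))) (\<Phi> (fst (snd p))))"
      using False by (simp add: inner_diff_left fun_eq_iff)
    show ?thesis
      unfolding recursion using Suc.IH step_size kernel by measurable
  qed simp
qed simp

lemma loss_W_measurable: "(\<lambda>\<omega>. loss (W t \<omega>) (\<omega> t)) \<in> borel_measurable M"
proof -
  have "(\<lambda>\<omega>. (\<omega>, \<omega> t)) \<in> measurable M (M \<Otimes>\<^sub>M \<rho>)"
    by (intro measurable_Pair measurable_ident_sets[OF refl] sample_measurable)
  from measurable_compose[OF this inner_W_measurable]
  have "(\<lambda>\<omega>. inner (W t \<omega>) (\<Phi> (fst (\<omega> t)))) \<in> borel_measurable M"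
    by simp
  then show ?thesis
    unfolding loss_def
    by (rule measurable_compose_restrict_Y[OF phi_meas, rotated]) (auto dest: sample_in_space)
qed

lemma loss_measurable: "loss v \<in> borel_measurable \<rho>"
  unfolding loss_def
  by (rule measurable_compose_restrict_Y[OF phi_meas]) (auto simp: space_rho)

subsection \<open>Expected progress of one step\<close>

lemma integrable_loss_W: "integrable M (\<lambda>\<omega>. loss (W t \<omega>) (\<omega> t))"
proof -
  obtain R where "\<forall>\<omega>\<in>space M. norm (W t \<omega>) \<le> R"
    using norm_W_bounded by blast
  then obtain C where "\<forall>\<omega>\<in>space M. \<bar>loss (W t \<omega>) (\<omega> t)\<bar> \<le> C"
    using loss_bounded[of "\<lambda>\<omega>. W t \<omega>" R t] by blast
  then show ?thesis
    by (intro M.integrable_const_bound[where B=C] loss_W_measurable) auto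
qed

lemma integrable_loss: "integrable M (\<lambda>\<omega>. loss v (\<omega> t))"
proof -
  obtain C where "\<forall>\<omega>\<in>space M. \<bar>loss v (\<omega> t)\<bar> \<le> C"
    using loss_bounded[of "\<lambda>_. v" "norm v"] by auto
  then show ?thesis
    by (intro M.integrable_const_bound[where B=C] measurable_compose[OF sample_measurable loss_measurable])
      auto
qed

text \<open>The iterate \<open>W t\<close> does not depend on the sample \<open>\<omega> t\<close>, so integrating out this sample
  turns the loss at it into the risk of \<open>W t\<close>.\<close>
lemma integrable_risk_W: "integrable M (\<lambda>\<omega>. risk (W t \<omega>))"
  and expected_loss_W: "(\<integral>\<omega>. loss (W t \<omega>) (\<omega> t) \<partial>M) = (\<integral>\<omega>. risk (W t \<omega>) \<partial>M)"
proof -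
  have "W t (\<omega> (t := z)) = W t \<omega>" for \<omega> z
    by (rule ogd_cong) simp
  then have "(\<lambda>\<omega>. \<integral>z. loss (W t (\<omega> (t := z))) ((\<omega> (t := z)) t) \<partial>\<rho>) = (\<lambda>\<omega>. risk (W t \<omega>))"
    by (simp add: risk_eq_integral_loss)
  then show "integrable M (\<lambda>\<omega>. risk (W t \<omega>))"
    and "(\<integral>\<omega>. loss (W t \<omega>) (\<omega> t) \<partial>M) = (\<integral>\<omega>. risk (W t \<omega>) \<partial>M)"
    using integral_PiM_fun_upd[OF rho_prob integrable_loss_W[of t], where t=t] by simp_all
qed

lemma expected_loss: "(\<integral>\<omega>. loss v (\<omega> t) \<partial>M) = risk v"
proof -
  have "(\<integral>\<omega>. loss v (\<omega> t) \<partial>M) = (\<integral>z. loss v z \<partial>distr M \<rho> (\<lambda>\<omega>. \<omega> t))"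
    by (rule integral_distr[symmetric, OF sample_measurable loss_measurable])
  also have "\<dots> = risk v"
    using distr_PiM_component[of UNIV "\<lambda>_. \<rho>" t] rho_prob by (simp add: risk_eq_integral_loss)
  finally show ?thesis .
qed

lemma risk_nonneg: "0 \<le> risk v"
  unfolding risk_eq_integral_loss loss_def
  by (intro Bochner_Integration.integral_nonneg) (auto simp: space_rho phi_nonneg)

definition excess :: "nat \<Rightarrow> real" where
  "excess t = (\<integral>\<omega>. risk (W t \<omega>) - risk wH \<partial>M)"

lemma excess_eq: "excess t = (\<integral>\<omega>. risk (W t \<omega>) \<partial>M) - risk wH"
  unfolding excess_def using integrable_risk_W by (simp add: M.prob_space)

lemma excess_nonneg: "0 \<le> excess t"
  unfolding excess_def by (intro Bochner_Integration.integral_nonneg) (simp add: wH_min)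

lemma sq_dist_step_le:
  assumes t: "1 \<le> t" and \<omega>: "\<omega> \<in> space M"
  shows "(norm (W (Suc t) \<omega> - v))\<^sup>2 \<le> (norm (W t \<omega> - v))\<^sup>2
    + 2 * \<eta> t * (loss v (\<omega> t) - loss (W t \<omega>) (\<omega> t))
    + (\<eta> t)\<^sup>2 * \<kappa>\<^sup>2 * (4 * L\<^sup>2 + 4 * L * loss (W t \<omega>) (\<omega> t))"
proof -
  define x y where "x = fst (\<omega> t)" and "y = snd (\<omega> t)"
  define s h where "s = inner (W t \<omega>) (\<Phi> x)" and "h = inner v (\<Phi> x)"
  define c where "c = \<eta> t * \<phi>' y s"
  have x: "x \<in> X" and y: "y \<in> Y"
    using sample_in_space[OF \<omega>] by (auto simp: x_def y_def)
  have "W (Suc t) \<omega> - v = (W t \<omega> - v) - c *\<^sub>R \<Phi> x"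
    using t by (simp add: x_def y_def s_def c_def)
  then have "(norm (W (Suc t) \<omega> - v))\<^sup>2 = (norm ((W t \<omega> - v) - c *\<^sub>R \<Phi> x))\<^sup>2"
    by (simp only:)
  also have "\<dots> = (norm (W t \<omega> - v))\<^sup>2 - 2 * c * (s - h) + c\<^sup>2 * (norm (\<Phi> x))\<^sup>2"
    unfolding power2_norm_eq_inner s_def h_def
    by (simp add: inner_commute algebra_simps power2_eq_square)
  finally have expand: "(norm (W (Suc t) \<omega> - v))\<^sup>2
      = (norm (W t \<omega> - v))\<^sup>2 - 2 * c * (s - h) + c\<^sup>2 * (norm (\<Phi> x))\<^sup>2" .
  have "\<phi>' y s * (h - s) \<le> \<phi> y h - \<phi> y s"
    using phi_above_tangent[OF y, of s h] by simp
  then have "- 2 * c * (s - h) \<le> 2 * \<eta> t * (\<phi> y h - \<phi> y s)"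
    using eta_pos[OF t] mult_left_mono[of _ _ "2 * \<eta> t"] by (fastforce simp: c_def algebra_simps)
  moreover have "(\<phi>' y s)\<^sup>2 * (norm (\<Phi> x))\<^sup>2 \<le> (4 * L\<^sup>2 + 4 * L * \<phi> y s) * \<kappa>\<^sup>2"
    using phi'_sq_le[OF y, of s] norm_Phi_le[OF x]
    by (intro mult_mono power_mono) (auto intro: order_trans[OF zero_le_power2])
  then have "c\<^sup>2 * (norm (\<Phi> x))\<^sup>2 \<le> (\<eta> t)\<^sup>2 * \<kappa>\<^sup>2 * (4 * L\<^sup>2 + 4 * L * \<phi> y s)"
    using mult_left_mono[OF _ zero_le_power2[of "\<eta> t"]]
    by (fastforce simp: c_def algebra_simps)
  ultimately show ?thesis
    using expand by (simp add: loss_def x_def y_def s_def h_def)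
qed

definition increment :: "nat \<Rightarrow> (nat \<Rightarrow> 'x \<times> real) \<Rightarrow> real" where
  "increment t \<omega> = 2 * \<eta> t * (loss wH (\<omega> t) - loss (W t \<omega>) (\<omega> t))
    + (\<eta> t)\<^sup>2 * \<kappa>\<^sup>2 * (4 * L\<^sup>2 + 4 * L * loss (W t \<omega>) (\<omega> t))"

lemma integrable_increment: "integrable M (increment t)"
  unfolding increment_def[abs_def] using integrable_loss integrable_loss_W by simp

lemma integral_increment:
  "(\<integral>\<omega>. increment t \<omega> \<partial>M) = - 2 * \<eta> t * excess t
    + (\<eta> t)\<^sup>2 * \<kappa>\<^sup>2 * (4 * L\<^sup>2 + 4 * L * (risk wH + excess t))"
  unfolding increment_def[abs_def] using integrable_loss integrable_loss_W
  by (simp add: expected_loss expected_loss_W excess_eq M.prob_space algebra_simps)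

lemma integral_increment_le:
  assumes t: "1 \<le> t" and small: "4 * L * \<kappa>\<^sup>2 * \<eta> t \<le> 1"
  shows "(\<integral>\<omega>. increment t \<omega> \<partial>M) \<le> - \<eta> t * excess t + \<kappa>\<^sup>2 * (4 * L\<^sup>2 + 4 * L * risk wH) * (\<eta> t)\<^sup>2"
proof -
  have "(\<eta> t)\<^sup>2 * \<kappa>\<^sup>2 * (4 * L) * excess t = \<eta> t * excess t * (4 * L * \<kappa>\<^sup>2 * \<eta> t)"
    by (simp add: power2_eq_square)
  also have "\<dots> \<le> \<eta> t * excess t"
    using small eta_pos[OF t] excess_nonneg[of t] by (simp add: mult_left_le)
  finally show ?thesis
    unfolding integral_increment by (simp add: algebra_simps)
qed

text \<open>The squared distance to \<open>wH\<close> need not be measurable, as the feature space is not assumed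
  separable; so the telescoped bound is proved pointwise and only the increments are integrated.\<close>
lemma weighted_excess_tail_le:
  assumes T0: "1 \<le> T0" and small: "\<And>t. T0 \<le> t \<Longrightarrow> 4 * L * \<kappa>\<^sup>2 * \<eta> t \<le> 1"
  shows "\<exists>R. \<forall>T\<ge>T0. (\<Sum>t=T0..T. \<eta> t * excess t)
    \<le> R + \<kappa>\<^sup>2 * (4 * L\<^sup>2 + 4 * L * risk wH) * (\<Sum>t=T0..T. (\<eta> t)\<^sup>2)"
proof -
  define C where "C = \<kappa>\<^sup>2 * (4 * L\<^sup>2 + 4 * L * risk wH)"
  define D where "D t \<omega> = (norm (W t \<omega> - wH))\<^sup>2" for t \<omega>
  obtain R where R: "\<And>\<omega>. \<omega> \<in> space M \<Longrightarrow> norm (W T0 \<omega>) \<le> R"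
    using norm_W_bounded by blast
  have "(\<Sum>t=T0..T. \<eta> t * excess t) \<le> (R + norm wH)\<^sup>2 + C * (\<Sum>t=T0..T. (\<eta> t)\<^sup>2)"
    if T: "T0 \<le> T" for T
  proof -
    have "0 \<le> (R + norm wH)\<^sup>2 + (\<Sum>t=T0..T. increment t \<omega>)" if \<omega>: "\<omega> \<in> space M" for \<omega>
    proof -
      have "D T0 \<omega> \<le> (R + norm wH)\<^sup>2"
        unfolding D_def using R[OF \<omega>] norm_triangle_ineq4[of "W T0 \<omega>" wH]
        by (intro power_mono) auto
      moreover have "D (Suc T) \<omega> - D T0 \<omega> = (\<Sum>t=T0..T. D (Suc t) \<omega> - D t \<omega>)"
        using sum_Suc_diff[of T0 T "\<lambda>t. D t \<omega>"] T by simp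
      moreover have "\<dots> \<le> (\<Sum>t=T0..T. increment t \<omega>)"
        using sq_dist_step_le[OF _ \<omega>] T0 unfolding D_def increment_def
        by (intro sum_mono) (simp add: algebra_simps)
      moreover have "0 \<le> D (Suc T) \<omega>"
        by (simp add: D_def)
      ultimately show ?thesis by linarith
    qed
    then have "0 \<le> (\<integral>\<omega>. (R + norm wH)\<^sup>2 + (\<Sum>t=T0..T. increment t \<omega>) \<partial>M)"
      by (intro Bochner_Integration.integral_nonneg) auto
    also have "\<dots> = (R + norm wH)\<^sup>2 + (\<Sum>t=T0..T. \<integral>\<omega>. increment t \<omega> \<partial>M)"
      using integrable_increment by (simp add: M.prob_space)
    also have "\<dots> \<le> (R + norm wH)\<^sup>2 + (\<Sum>t=T0..T. - \<eta> t * excess t + C * (\<eta> t)\<^sup>2)"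
      using integral_increment_le T0 small unfolding C_def by (intro add_left_mono sum_mono) auto
    also have "\<dots> = (R + norm wH)\<^sup>2 - (\<Sum>t=T0..T. \<eta> t * excess t) + C * (\<Sum>t=T0..T. (\<eta> t)\<^sup>2)"
      by (simp add: sum_subtractf sum_distrib_left)
    finally show ?thesis
      by linarith
  qed
  then show ?thesis
    unfolding C_def by blast
qed

lemma weighted_excess_le:
  assumes eta_lim: "\<eta> \<longlonglongrightarrow> 0"
  shows "\<exists>R. eventually (\<lambda>T. (\<Sum>t=1..T. \<eta> t * excess t)
    \<le> R + \<kappa>\<^sup>2 * (4 * L\<^sup>2 + 4 * L * risk wH) * (\<Sum>t=1..T. (\<eta> t)\<^sup>2)) sequentially"
proof -
  define C where "C = \<kappa>\<^sup>2 * (4 * L\<^sup>2 + 4 * L * risk wH)"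
  have "(\<lambda>t. 4 * L * \<kappa>\<^sup>2 * \<eta> t) \<longlonglongrightarrow> 0"
    by (rule tendsto_mult_right_zero[OF eta_lim])
  from order_tendstoD(2)[OF this, of 1]
  obtain N where N: "\<And>t. N \<le> t \<Longrightarrow> 4 * L * \<kappa>\<^sup>2 * \<eta> t < 1"
    by (auto simp: eventually_sequentially)
  define T0 where "T0 = max N 1"
  have T0: "1 \<le> T0"
    unfolding T0_def by simp
  have "4 * L * \<kappa>\<^sup>2 * \<eta> t \<le> 1" if "T0 \<le> t" for t
    using N[of t] that unfolding T0_def by simp
  then obtain R where R: "\<And>T. T0 \<le> T \<Longrightarrow> (\<Sum>t=T0..T. \<eta> t * excess t) \<le> R + C * (\<Sum>t=T0..T. (\<eta> t)\<^sup>2)"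
    using weighted_excess_tail_le[of T0] unfolding T0_def C_def by auto
  have "(\<Sum>t=1..T. \<eta> t * excess t) \<le> (R + (\<Sum>t=1..T0-1. \<eta> t * excess t)) + C * (\<Sum>t=1..T. (\<eta> t)\<^sup>2)"
    if T: "T0 \<le> T" for T
  proof -
    have "(\<Sum>t=1..T. \<eta> t * excess t) = (\<Sum>t=1..T0-1. \<eta> t * excess t) + (\<Sum>t=T0..T. \<eta> t * excess t)"
      using sum_atLeastAtMost_split[of 1 "T0 - 1" T "\<lambda>t. \<eta> t * excess t"] T T0 by simp
    moreover have "C * (\<Sum>t=T0..T. (\<eta> t)\<^sup>2) \<le> C * (\<Sum>t=1..T. (\<eta> t)\<^sup>2)"
      unfolding C_def using L_pos risk_nonneg[of wH] T0
      by (intro mult_left_mono sum_mono2) auto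
    ultimately show ?thesis
      using R[OF T] by linarith
  qed
  then show ?thesis
    unfolding C_def eventually_sequentially by blast
qed

lemma excess_convergence:
  assumes eta_lim: "\<eta> \<longlonglongrightarrow> 0"
    and eta_div: "filterlim (\<lambda>T. \<Sum>t=1..T. \<eta> t) at_top sequentially"
  shows "liminf (\<lambda>t. ereal (excess t)) = 0"
    and "(\<lambda>T. (\<Sum>t=1..T. \<eta> t * excess t) / (\<Sum>t=1..T. \<eta> t)) \<longlonglongrightarrow> 0"
proof -
  obtain R where bound: "eventually (\<lambda>T. (\<Sum>t=1..T. \<eta> t * excess t)
      \<le> R + \<kappa>\<^sup>2 * (4 * L\<^sup>2 + 4 * L * risk wH) * (\<Sum>t=1..T. (\<eta> t)\<^sup>2)) sequentially"
    using weighted_excess_le[OF eta_lim] by blast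
  show average: "(\<lambda>T. (\<Sum>t=1..T. \<eta> t * excess t) / (\<Sum>t=1..T. \<eta> t)) \<longlonglongrightarrow> 0"
    using eta_pos eta_lim eta_div excess_nonneg bound by (rule weighted_average_tendsto_0)
  show "liminf (\<lambda>t. ereal (excess t)) = 0"
    using eta_pos eta_div excess_nonneg average by (rule liminf_eq_0_if_weighted_average_tendsto_0)
qed

end

theorem proposition2:
  fixes X :: "(real ^ 'd) set" and Y :: "real set"
    and \<rho> :: "((real ^ 'd) \<times> real) measure"
    and K :: "real ^ 'd \<Rightarrow> real ^ 'd \<Rightarrow> real"
    and \<Phi> :: "real ^ 'd \<Rightarrow> 'h::{real_inner, complete_space}"
    and \<phi> \<phi>' :: "real \<Rightarrow> real \<Rightarrow> real"
    and \<eta> :: "nat \<Rightarrow> real"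
    and \<alpha> L :: real
    and wH :: 'h
  assumes rho_prob: "prob_space \<rho>"
    and rho_sets: "sets \<rho> = sets (restrict_space borel (X \<times> Y))"
    and K_feature: "\<forall>x\<in>X. \<forall>x'\<in>X. K x x' = inner (\<Phi> x) (\<Phi> x')"
    and K_cont: "continuous_on (X \<times> X) (\<lambda>(x, x'). K x x')"
    and kappa_fin: "\<exists>\<kappa>. \<forall>x\<in>X. sqrt (K x x) \<le> \<kappa>"
    and phi_nonneg: "\<forall>y\<in>Y. \<forall>s. 0 \<le> \<phi> y s"
    and phi_meas: "(\<lambda>(y, s). \<phi> y s) \<in> borel_measurable (restrict_space borel (Y \<times> UNIV))"
    and phi_convex: "\<forall>y\<in>Y. convex_on UNIV (\<phi> y)"
    and phi_deriv: "\<forall>y\<in>Y. \<forall>s. (\<phi> y has_real_derivative \<phi>' y s) (at s)"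
    and alpha: "0 < \<alpha>" "\<alpha> \<le> 1" and L_pos: "0 < L"
    and phi_hoelder: "\<forall>y\<in>Y. \<forall>s s'. \<bar>\<phi>' y s - \<phi>' y s'\<bar> \<le> L * \<bar>s - s'\<bar> powr \<alpha>"
    and fH_min: "\<forall>w. gen_err \<rho> \<phi> (rkhs_fun \<Phi> wH) \<le> gen_err \<rho> \<phi> (rkhs_fun \<Phi> w)"
    and bdd0: "\<exists>B. \<forall>y\<in>Y. \<phi> y 0 \<le> B"
    and bddH: "\<exists>B. \<forall>x\<in>X. \<forall>y\<in>Y. \<phi> y (rkhs_fun \<Phi> wH x) \<le> B"
    and eta_pos: "\<forall>t\<ge>1. 0 < \<eta> t"
    and eta_lim: "\<eta> \<longlonglongrightarrow> 0"
    and eta_div: "filterlim (\<lambda>T. \<Sum>t=1..T. \<eta> t) at_top sequentially"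
  shows "liminf (\<lambda>t. ereal (\<integral>\<omega>. gen_err \<rho> \<phi> (rkhs_fun \<Phi> (ogd \<Phi> \<phi>' \<eta> \<omega> t))
                                   - gen_err \<rho> \<phi> (rkhs_fun \<Phi> wH) \<partial>(PiM UNIV (\<lambda>_. \<rho>)))) = 0 \<and>
         (\<lambda>T. (\<Sum>t=1..T. \<eta> t * (\<integral>\<omega>. gen_err \<rho> \<phi> (rkhs_fun \<Phi> (ogd \<Phi> \<phi>' \<eta> \<omega> t))
                                   - gen_err \<rho> \<phi> (rkhs_fun \<Phi> wH) \<partial>(PiM UNIV (\<lambda>_. \<rho>))))
             / (\<Sum>t=1..T. \<eta> t)) \<longlonglongrightarrow> 0"
proof -
  obtain \<kappa> where \<kappa>: "\<forall>x\<in>X. sqrt (K x x) \<le> \<kappa>"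
    using kappa_fin by blast
  obtain B where B: "\<forall>y\<in>Y. \<phi> y 0 \<le> B"
    using bdd0 by blast
  have norm_Phi: "norm (\<Phi> x) \<le> \<kappa>" if "x \<in> X" for x
    using \<kappa> K_feature that by (simp add: norm_eq_sqrt_inner)
  interpret ogd_setting X Y \<rho> \<Phi> \<phi> \<phi>' \<eta> \<alpha> L \<kappa> B wH
  proof (rule ogd_setting.intro)
    show "continuous_on X \<Phi>"
      by (rule continuous_on_feature_map[OF K_feature K_cont])
    show "\<And>x. x \<in> X \<Longrightarrow> norm (\<Phi> x) \<le> \<kappa>"
      by (rule norm_Phi)
  qed (fact rho_prob rho_sets phi_meas alpha L_pos
      | use phi_nonneg phi_convex phi_deriv phi_hoelder B fH_min eta_pos in blast)+
  show ?thesis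
    using excess_convergence[OF eta_lim eta_div] unfolding excess_def by (rule conjI)
qed

end
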